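(* Let $X+_{f,g}Y$ and $Z+_{h,j}W$ be Artin–Wraith glueings of topological spaces and let $\psi:X\to Z$ and $\phi:Y\to W$ be continuous maps. Define $\psi+\phi:X+_{f,g}Y\to Z+_{h,j}W$ by $\psi$ on $X$ and $\phi$ on $Y$. Then $\psi+\phi$ is continuous if and only if $f(\psi^{-1}(A))\subseteq\phi^{-1}(h(A))$ for all $A\in\mathrm{Closed}(Z)$ and $g(\phi^{-1}(B))\subseteq\psi^{-1}(j(B))$ for all $B\in\mathrm{Closed}(W)$.
   Context: $\mathrm{Closed}(A)$ is the set of closed subsets of a space $A$. A map $f:\mathrm{Closed}(X)\to\mathrm{Closed}(Y)$ is admissible if $f(\emptyset)=\emptyset$ and $f$ preserves finite unions. An admissible pair is a pair of admissible maps $f:\mathrm{Closed}(X)\to\mathrm{Closed}(Y)$, $g:\mathrm{Closed}(Y)\to\mathrm{Closed}(X)$ with $g\circ f(A)\subseteq A$ and $f\circ g(B)\subseteq B$ for all closed $A,B$. For such a pair, $X+_{f,g}Y$ is the set $X\sqcup Y$ whose closed sets are the $D$ with $D\cap X$ closed in $X$, $D\cap Y$ closed in $Y$, $f(D\cap X)\subseteq D$, $g(D\cap Y)\subseteq D$. Similarly for $(h,j)$ and $Z+_{h,j}W$. *)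

theory Defs
  imports "HOL-Analysis.Analysis"
begin

definition admissible :: "'a topology \<Rightarrow> 'b topology \<Rightarrow> ('a set \<Rightarrow> 'b set) \<Rightarrow> bool" where
  "admissible X Y f \<longleftrightarrow>
     (\<forall>A. closedin X A \<longrightarrow> closedin Y (f A)) \<and>
     f {} = {} \<and>
     (\<forall>A B. closedin X A \<longrightarrow> closedin X B \<longrightarrow> f (A \<union> B) = f A \<union> f B)"

definition admissible_pair ::
  "'a topology \<Rightarrow> 'b topology \<Rightarrow> ('a set \<Rightarrow> 'b set) \<Rightarrow> ('b set \<Rightarrow> 'a set) \<Rightarrow> bool" where
  "admissible_pair X Y f g \<longleftrightarrow>
     admissible X Y f \<and> admissible Y X g \<and>
     (\<forall>A. closedin X A \<longrightarrow> g (f A) \<subseteq> A) \<and>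
     (\<forall>B. closedin Y B \<longrightarrow> f (g B) \<subseteq> B)"

definition glue_closed ::
  "'a topology \<Rightarrow> 'b topology \<Rightarrow> ('a set \<Rightarrow> 'b set) \<Rightarrow> ('b set \<Rightarrow> 'a set) \<Rightarrow> ('a + 'b) set \<Rightarrow> bool" where
  "glue_closed X Y f g D \<longleftrightarrow>
     D \<subseteq> topspace X <+> topspace Y \<and>
     closedin X (Inl -` D) \<and> closedin Y (Inr -` D) \<and>
     Inr ` f (Inl -` D) \<subseteq> D \<and> Inl ` g (Inr -` D) \<subseteq> D"

definition glue ::
  "'a topology \<Rightarrow> 'b topology \<Rightarrow> ('a set \<Rightarrow> 'b set) \<Rightarrow> ('b set \<Rightarrow> 'a set) \<Rightarrow> ('a + 'b) topology" where
  "glue X Y f g = topology (\<lambda>U. U \<subseteq> topspace X <+> topspace Y \<and>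
      glue_closed X Y f g ((topspace X <+> topspace Y) - U))"

end

theory Submission imports Defs begin

text \<open>Every closed set of a glueing is of the form \<open>A <+> B\<close> with \<open>A\<close>, \<open>B\<close> closed and
  \<open>f A \<subseteq> B\<close>, \<open>g B \<subseteq> A\<close>, and the preimage of \<open>A <+> B\<close> under \<open>\<psi> + \<phi>\<close> is
  \<open>\<psi>\<^sup>-\<^sup>1 A <+> \<phi>\<^sup>-\<^sup>1 B\<close>, whose two parts are closed by continuity of \<open>\<psi>\<close> and \<open>\<phi>\<close>.
  So \<open>\<psi> + \<phi>\<close> is continuous iff \<open>f (\<psi>\<^sup>-\<^sup>1 A) \<subseteq> \<phi>\<^sup>-\<^sup>1 B\<close> and \<open>g (\<phi>\<^sup>-\<^sup>1 B) \<subseteq> \<psi>\<^sup>-\<^sup>1 A\<close>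
  whenever \<open>h A \<subseteq> B\<close> and \<open>j B \<subseteq> A\<close>. By monotonicity of preimages it suffices to take
  the least such \<open>B\<close>, namely \<open>h A\<close>, resp. the least such \<open>A\<close>, namely \<open>j B\<close>; these choices
  are legitimate because \<open>j (h A) \<subseteq> A\<close> and \<open>h (j B) \<subseteq> B\<close>.\<close>

lemma vimage_Inl_Plus [simp]: "Inl -` (A <+> B) = A"
  by auto

lemma vimage_Inr_Plus [simp]: "Inr -` (A <+> B) = B"
  by auto

lemma admissible_closedin: "admissible X Y f \<Longrightarrow> closedin X A \<Longrightarrow> closedin Y (f A)"
  unfolding admissible_def by blast

lemma admissible_empty: "admissible X Y f \<Longrightarrow> f {} = {}"
  unfolding admissible_def by blast

lemma admissible_Un:
  "admissible X Y f \<Longrightarrow> closedin X A \<Longrightarrow> closedin X B \<Longrightarrow> f (A \<union> B) = f A \<union> f B"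
  unfolding admissible_def by blast

lemma admissible_pairD:
  assumes "admissible_pair X Y f g"
  shows "admissible X Y f" "admissible Y X g"
    and "closedin X A \<Longrightarrow> g (f A) \<subseteq> A" "closedin Y B \<Longrightarrow> f (g B) \<subseteq> B"
  using assms unfolding admissible_pair_def by auto

lemma admissible_mono:
  assumes "admissible X Y f" "closedin X A" "closedin X B" "A \<subseteq> B"
  shows "f A \<subseteq> f B"
proof -
  have "f B = f (A \<union> B)"
    using \<open>A \<subseteq> B\<close> by (simp add: sup_absorb2)
  also have "\<dots> = f A \<union> f B"
    using assms by (simp add: admissible_Un)
  finally show ?thesis
    by blast
qed

lemma glue_closed_Plus_iff:
  "glue_closed X Y f g (A <+> B) \<longleftrightarrow>
     closedin X A \<and> closedin Y B \<and> f A \<subseteq> B \<and> g B \<subseteq> A"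
  using closedin_subset[of X A] closedin_subset[of Y B] unfolding glue_closed_def by auto

lemma glue_closed_empty:
  "admissible X Y f \<Longrightarrow> admissible Y X g \<Longrightarrow> glue_closed X Y f g {}"
  unfolding glue_closed_def by (simp add: admissible_empty)

lemma glue_closed_Un:
  assumes "admissible X Y f" "admissible Y X g"
    and "glue_closed X Y f g C" "glue_closed X Y f g D"
  shows "glue_closed X Y f g (C \<union> D)"
proof -
  have C: "closedin X (Inl -` C)" "closedin Y (Inr -` C)"
    and D: "closedin X (Inl -` D)" "closedin Y (Inr -` D)"
    using assms(3,4) unfolding glue_closed_def by blast+
  have "f (Inl -` (C \<union> D)) = f (Inl -` C) \<union> f (Inl -` D)"
    unfolding vimage_Un by (rule admissible_Un[OF assms(1) C(1) D(1)])
  moreover have "g (Inr -` (C \<union> D)) = g (Inr -` C) \<union> g (Inr -` D)"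
    unfolding vimage_Un by (rule admissible_Un[OF assms(2) C(2) D(2)])
  ultimately show ?thesis
    using assms(3,4) unfolding glue_closed_def by auto
qed

lemma glue_closed_Inter:
  assumes f: "admissible X Y f" and g: "admissible Y X g"
    and K: "\<And>C. C \<in> K \<Longrightarrow> glue_closed X Y f g C"
  shows "glue_closed X Y f g ((topspace X <+> topspace Y) \<inter> \<Inter>K)"
    (is "glue_closed X Y f g ?D")
proof -
  have "Inl -` ?D = \<Inter>(insert (topspace X) ((\<lambda>C. Inl -` C) ` K))"
    and "Inr -` ?D = \<Inter>(insert (topspace Y) ((\<lambda>C. Inr -` C) ` K))"
    by auto
  moreover have "closedin X (\<Inter>(insert (topspace X) ((\<lambda>C. Inl -` C) ` K)))"
    using K unfolding glue_closed_def by (intro closedin_Inter) auto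
  moreover have "closedin Y (\<Inter>(insert (topspace Y) ((\<lambda>C. Inr -` C) ` K)))"
    using K unfolding glue_closed_def by (intro closedin_Inter) auto
  ultimately have closed: "closedin X (Inl -` ?D)" "closedin Y (Inr -` ?D)"
    by (simp_all only:)
  have "f (Inl -` ?D) \<subseteq> Inr -` C" and "g (Inr -` ?D) \<subseteq> Inl -` C" if "C \<in> K" for C
  proof -
    have "closedin X (Inl -` C)" "closedin Y (Inr -` C)"
      and "f (Inl -` C) \<subseteq> Inr -` C" "g (Inr -` C) \<subseteq> Inl -` C"
      using K[OF that] unfolding glue_closed_def image_subset_iff_subset_vimage by blast+
    moreover have "Inl -` ?D \<subseteq> Inl -` C" "Inr -` ?D \<subseteq> Inr -` C"
      using that by auto
    ultimately show "f (Inl -` ?D) \<subseteq> Inr -` C" and "g (Inr -` ?D) \<subseteq> Inl -` C"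
      using admissible_mono[OF f closed(1)] admissible_mono[OF g closed(2)] by blast+
  qed
  moreover have "f (Inl -` ?D) \<subseteq> topspace Y" and "g (Inr -` ?D) \<subseteq> topspace X"
    using closed f g by (meson admissible_closedin closedin_subset)+
  ultimately have "f (Inl -` ?D) \<subseteq> Inr -` ?D" and "g (Inr -` ?D) \<subseteq> Inl -` ?D"
    by blast+
  with closed show ?thesis
    unfolding glue_closed_def image_subset_iff_subset_vimage by blast
qed

lemma istopology_glue:
  assumes "admissible X Y f" "admissible Y X g"
  shows "istopology (\<lambda>U. U \<subseteq> topspace X <+> topspace Y \<and>
      glue_closed X Y f g ((topspace X <+> topspace Y) - U))"
    (is "istopology ?open")
  unfolding istopology_def
proof (rule conjI; intro allI impI)
  let ?S = "topspace X <+> topspace Y"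
  fix U V
  assume U: "?open U" and V: "?open V"
  then have "glue_closed X Y f g ((?S - U) \<union> (?S - V))"
    using assms glue_closed_Un by blast
  moreover have "(?S - U) \<union> (?S - V) = ?S - (U \<inter> V)"
    by blast
  ultimately show "?open (U \<inter> V)"
    using U by auto
next
  let ?S = "topspace X <+> topspace Y"
  fix K
  assume K: "\<forall>U\<in>K. ?open U"
  then have "glue_closed X Y f g (?S \<inter> \<Inter>((\<lambda>U. ?S - U) ` K))"
    using assms by (intro glue_closed_Inter) auto
  moreover have "?S \<inter> \<Inter>((\<lambda>U. ?S - U) ` K) = ?S - \<Union>K"
    by blast
  ultimately show "?open (\<Union>K)"
    using K by auto
qed

lemma openin_glue:
  assumes "admissible X Y f" "admissible Y X g"
  shows "openin (glue X Y f g) U \<longleftrightarrow>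
    U \<subseteq> topspace X <+> topspace Y \<and> glue_closed X Y f g ((topspace X <+> topspace Y) - U)"
  unfolding glue_def using istopology_glue[OF assms] by simp

lemma topspace_glue:
  assumes "admissible X Y f" "admissible Y X g"
  shows "topspace (glue X Y f g) = topspace X <+> topspace Y"
proof -
  have "openin (glue X Y f g) (topspace X <+> topspace Y)"
    using openin_glue[OF assms] glue_closed_empty[OF assms] by simp
  then show ?thesis
    using openin_glue[OF assms] unfolding topspace_def by blast
qed

lemma closedin_glue:
  assumes "admissible X Y f" "admissible Y X g"
  shows "closedin (glue X Y f g) D \<longleftrightarrow> glue_closed X Y f g D"
proof -
  let ?S = "topspace X <+> topspace Y"
  have "closedin (glue X Y f g) D \<longleftrightarrow> D \<subseteq> ?S \<and> glue_closed X Y f g (?S - (?S - D))"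
    unfolding closedin_def topspace_glue[OF assms] openin_glue[OF assms] by simp
  moreover have "D \<subseteq> ?S \<Longrightarrow> ?S - (?S - D) = D"
    by blast
  moreover have "glue_closed X Y f g D \<Longrightarrow> D \<subseteq> ?S"
    unfolding glue_closed_def by blast
  ultimately show ?thesis
    by metis
qed

lemma closedin_glue_iff_Plus:
  assumes "admissible X Y f" "admissible Y X g"
  shows "closedin (glue X Y f g) D \<longleftrightarrow>
    (\<exists>A B. D = A <+> B \<and> closedin X A \<and> closedin Y B \<and> f A \<subseteq> B \<and> g B \<subseteq> A)"
proof
  assume "closedin (glue X Y f g) D"
  then have "glue_closed X Y f g D"
    using closedin_glue[OF assms] by blast
  moreover from this have "D = Inl -` D <+> Inr -` D"
    unfolding glue_closed_def by auto
  ultimately show "\<exists>A B. D = A <+> B \<and> closedin X A \<and> closedin Y B \<and> f A \<subseteq> B \<and> g B \<subseteq> A"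
    by (metis glue_closed_Plus_iff)
qed (auto simp: closedin_glue[OF assms] glue_closed_Plus_iff)

lemma vimage_map_sum_Plus:
  "{z \<in> S <+> T. map_sum \<psi> \<phi> z \<in> A <+> B} = {x \<in> S. \<psi> x \<in> A} <+> {y \<in> T. \<phi> y \<in> B}"
  by auto

lemma continuous_map_glue_iff:
  assumes f: "admissible X Y f" and g: "admissible Y X g"
    and h: "admissible Z W h" and j: "admissible W Z j"
    and \<psi>: "continuous_map X Z \<psi>" and \<phi>: "continuous_map Y W \<phi>"
  shows "continuous_map (glue X Y f g) (glue Z W h j) (map_sum \<psi> \<phi>) \<longleftrightarrow>
    (\<forall>A B. closedin Z A \<longrightarrow> closedin W B \<longrightarrow> h A \<subseteq> B \<longrightarrow> j B \<subseteq> A \<longrightarrow>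
       f {x \<in> topspace X. \<psi> x \<in> A} \<subseteq> {y \<in> topspace Y. \<phi> y \<in> B} \<and>
       g {y \<in> topspace Y. \<phi> y \<in> B} \<subseteq> {x \<in> topspace X. \<psi> x \<in> A})"
proof -
  let ?m = "map_sum \<psi> \<phi>"
  have maps_topspace: "\<forall>z \<in> topspace (glue X Y f g). ?m z \<in> topspace (glue Z W h j)"
    using \<psi> \<phi> by (auto simp: topspace_glue f g h j continuous_map_def)
  have closedin_preimage:
    "closedin (glue X Y f g) {z \<in> topspace (glue X Y f g). ?m z \<in> A <+> B} \<longleftrightarrow>
       f {x \<in> topspace X. \<psi> x \<in> A} \<subseteq> {y \<in> topspace Y. \<phi> y \<in> B} \<and>
       g {y \<in> topspace Y. \<phi> y \<in> B} \<subseteq> {x \<in> topspace X. \<psi> x \<in> A}"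
    if "closedin Z A" "closedin W B" for A B
  proof -
    have "closedin X {x \<in> topspace X. \<psi> x \<in> A}" "closedin Y {y \<in> topspace Y. \<phi> y \<in> B}"
      using \<psi> \<phi> that by (simp_all add: continuous_map_closedin)
    then show ?thesis
      by (simp add: topspace_glue closedin_glue f g vimage_map_sum_Plus glue_closed_Plus_iff)
  qed
  have "(\<forall>C. closedin (glue Z W h j) C \<longrightarrow>
      closedin (glue X Y f g) {z \<in> topspace (glue X Y f g). ?m z \<in> C}) \<longleftrightarrow>
    (\<forall>A B. closedin Z A \<longrightarrow> closedin W B \<longrightarrow> h A \<subseteq> B \<longrightarrow> j B \<subseteq> A \<longrightarrow>
      closedin (glue X Y f g) {z \<in> topspace (glue X Y f g). ?m z \<in> A <+> B})"
    unfolding closedin_glue_iff_Plus[OF h j] by blast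
  with maps_topspace show ?thesis
    unfolding continuous_map_closedin by (simp add: Pi_iff closedin_preimage)
qed

lemma admissible_pair_compatible_iff_least:
  assumes hj: "admissible_pair Z W h j"
    and P_mono: "\<And>A B B'. B \<subseteq> B' \<Longrightarrow> P A B \<Longrightarrow> P A B'"
    and Q_mono: "\<And>A A' B. A \<subseteq> A' \<Longrightarrow> Q A B \<Longrightarrow> Q A' B"
  shows "(\<forall>A B. closedin Z A \<longrightarrow> closedin W B \<longrightarrow> h A \<subseteq> B \<longrightarrow> j B \<subseteq> A \<longrightarrow> P A B \<and> Q A B) \<longleftrightarrow>
    (\<forall>A. closedin Z A \<longrightarrow> P A (h A)) \<and> (\<forall>B. closedin W B \<longrightarrow> Q (j B) B)"
proof (intro iffI conjI allI impI)
  fix A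
  assume "\<forall>A B. closedin Z A \<longrightarrow> closedin W B \<longrightarrow> h A \<subseteq> B \<longrightarrow> j B \<subseteq> A \<longrightarrow> P A B \<and> Q A B"
    and A: "closedin Z A"
  moreover have "closedin W (h A)" "j (h A) \<subseteq> A"
    using admissible_pairD[OF hj] A by (simp_all add: admissible_closedin)
  ultimately show "P A (h A)"
    by blast
next
  fix B
  assume "\<forall>A B. closedin Z A \<longrightarrow> closedin W B \<longrightarrow> h A \<subseteq> B \<longrightarrow> j B \<subseteq> A \<longrightarrow> P A B \<and> Q A B"
    and B: "closedin W B"
  moreover have "closedin Z (j B)" "h (j B) \<subseteq> B"
    using admissible_pairD[OF hj] B by (simp_all add: admissible_closedin)
  ultimately show "Q (j B) B"
    by blast
next
  fix A B
  assume "(\<forall>A. closedin Z A \<longrightarrow> P A (h A)) \<and> (\<forall>B. closedin W B \<longrightarrow> Q (j B) B)"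
    and "closedin Z A" "closedin W B" "h A \<subseteq> B" "j B \<subseteq> A"
  then show "P A B" "Q A B"
    using P_mono[of "h A" B A] Q_mono[of "j B" A B] by blast+
qed

theorem mainTheorem10:
  fixes X :: "'a topology" and Y :: "'b topology" and Z :: "'c topology" and W :: "'d topology"
    and f :: "'a set \<Rightarrow> 'b set" and g :: "'b set \<Rightarrow> 'a set"
    and h :: "'c set \<Rightarrow> 'd set" and j :: "'d set \<Rightarrow> 'c set"
    and \<psi> :: "'a \<Rightarrow> 'c" and \<phi> :: "'b \<Rightarrow> 'd"
  assumes "admissible_pair X Y f g"
    and "admissible_pair Z W h j"
    and "continuous_map X Z \<psi>"
    and "continuous_map Y W \<phi>"
  shows "continuous_map (glue X Y f g) (glue Z W h j) (map_sum \<psi> \<phi>) \<longleftrightarrow>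
    (\<forall>A. closedin Z A \<longrightarrow>
        f {x \<in> topspace X. \<psi> x \<in> A} \<subseteq> {y \<in> topspace Y. \<phi> y \<in> h A}) \<and>
    (\<forall>B. closedin W B \<longrightarrow>
        g {y \<in> topspace Y. \<phi> y \<in> B} \<subseteq> {x \<in> topspace X. \<psi> x \<in> j B})"
  unfolding continuous_map_glue_iff[OF admissible_pairD(1,2)[OF assms(1)]
      admissible_pairD(1,2)[OF assms(2)] assms(3,4)]
  by (rule admissible_pair_compatible_iff_least[OF assms(2)]) auto

end
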